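(* Let $V:\mathbb R\to\mathbb R$ be smooth and $\alpha_{11},\alpha_{13},\alpha_{33},\beta\in\mathbb R$. Let $u_h,v_h,w_h$ be continuously differentiable in $t$ with values in $V_h$ and satisfy, for every $j$ and all $\varphi_1,\varphi_2,\varphi_3\in V_h$, $$-\int_{I_j}\partial_tv_h\varphi_1dx-\int_{I_j}w_h\partial_x\varphi_1dx+(\widehat{w_h}\varphi_1^-)_{j+\frac12}-(\widehat{w_h}\varphi_1^+)_{j-\frac12}=-\int_{I_j}V'(u_h)\varphi_1dx,$$ $$\int_{I_j}\partial_tu_h\varphi_2dx+(\widehat{v_h}\varphi_2^-)_{j+\frac12}-(\widehat{v_h}\varphi_2^+)_{j-\frac12}=\int_{I_j}v_h\varphi_2dx,$$ $$\int_{I_j}u_h\partial_x\varphi_3dx-(\widehat{u_h}\varphi_3^-)_{j+\frac12}+(\widehat{u_h}\varphi_3^+)_{j-\frac12}=-\int_{I_j}w_h\varphi_3dx,$$ with interface fluxes $\widehat{w_h}=\{w_h\}+\alpha_{11}[u_h]+\alpha_{13}[w_h]-\beta\,\partial_t[v_h]$, $\widehat{v_h}=\beta\,\partial_t[u_h]$, $\widehat{u_h}=\{u_h\}-\alpha_{13}[u_h]-\alpha_{33}[w_h]$. Then the discrete energy $$\mathcal E_h=\int_\Omega\Big(\tfrac12(v_h^2+w_h^2)-V(u_h)\Big)dx+\tfrac12\sum_j\big(\alpha_{11}[u_h]^2-\alpha_{33}[w_h]^2\big)_{j+\frac12}$$ is constant in time.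
   Context: This is a DG discretization of the Hamiltonian wave equation $u_{tt}-u_{xx}=V'(u)$, written as $-v_t+w_x=-V'(u)$, $u_t=v$, $-u_x=-w$. Mesh and spaces: a one-dimensional domain $\Omega$ is partitioned into cells $I_j=[x_{j-1/2},x_{j+1/2}]$, $j=1,\dots,N$, with periodic boundary conditions (interface indices modulo $N$). For fixed $k\ge0$, $V_h=\{v\in L^2(\Omega): v|_{I_j}\text{ is a polynomial of degree}\le k\ \forall j\}$. For $v\in V_h$, $v^\pm_{j+1/2}$ are its right/left limits at $x_{j+1/2}$, $\{v\}=\frac12(v^++v^-)$, $[v]=v^+-v^-$; subscript $j\pm\frac12$ denotes evaluation at $x_{j\pm1/2}$. *)

theory Defs
  imports "HOL-Analysis.Analysis"
begin

text \<open>Mesh: interface points xp 0 < xp 1 < ... < xp N, where xp m stands for x_{m+1/2};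
  cell I_j = [xp (j-1), xp j] for j = 1..N.  Periodicity: interface N (x_{N+1/2}) is
  identified with interface 0 (x_{1/2}).  An element of V_h is represented by its
  polynomial coefficients on each cell: c j i is the coefficient of x^i on cell j (i \<le> k).\<close>

definition cellval :: "nat \<Rightarrow> (nat \<Rightarrow> nat \<Rightarrow> real) \<Rightarrow> nat \<Rightarrow> real \<Rightarrow> real" where
  "cellval k c j x = (\<Sum>i\<le>k. c j i * x ^ i)"

definition tracem :: "nat \<Rightarrow> (nat \<Rightarrow> real) \<Rightarrow> (nat \<Rightarrow> nat \<Rightarrow> real) \<Rightarrow> nat \<Rightarrow> real" where
  "tracem k xp c m = cellval k c m (xp m)"

definition tracep :: "nat \<Rightarrow> nat \<Rightarrow> (nat \<Rightarrow> real) \<Rightarrow> (nat \<Rightarrow> nat \<Rightarrow> real) \<Rightarrow> nat \<Rightarrow> real" where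
  "tracep k N xp c m = (if m = N then cellval k c 1 (xp 0) else cellval k c (m + 1) (xp m))"

definition jump :: "nat \<Rightarrow> nat \<Rightarrow> (nat \<Rightarrow> real) \<Rightarrow> (nat \<Rightarrow> nat \<Rightarrow> real) \<Rightarrow> nat \<Rightarrow> real" where
  "jump k N xp c m = tracep k N xp c m - tracem k xp c m"

definition avg :: "nat \<Rightarrow> nat \<Rightarrow> (nat \<Rightarrow> real) \<Rightarrow> (nat \<Rightarrow> nat \<Rightarrow> real) \<Rightarrow> nat \<Rightarrow> real" where
  "avg k N xp c m = (tracep k N xp c m + tracem k xp c m) / 2"

definition prv :: "nat \<Rightarrow> nat \<Rightarrow> nat" where
  "prv N j = (if j = 1 then N else j - 1)"

definition energy :: "nat \<Rightarrow> nat \<Rightarrow> (nat \<Rightarrow> real) \<Rightarrow> (real \<Rightarrow> real) \<Rightarrow> real \<Rightarrow> real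
    \<Rightarrow> (nat \<Rightarrow> nat \<Rightarrow> real) \<Rightarrow> (nat \<Rightarrow> nat \<Rightarrow> real) \<Rightarrow> (nat \<Rightarrow> nat \<Rightarrow> real) \<Rightarrow> real" where
  "energy k N xp V a11 a33 u v w =
     (\<Sum>j=1..N. integral {xp (j - 1)..xp j}
        (\<lambda>x. (cellval k v j x ^ 2 + cellval k w j x ^ 2) / 2 - V (cellval k u j x)))
     + (1/2) * (\<Sum>m=1..N. a11 * (jump k N xp u m) ^ 2 - a33 * (jump k N xp w m) ^ 2)"

end

theory Submission
  imports Defs
begin

(* Differentiate the energy in time. Test the first equation with \<phi>1 = \<partial>t uh, the second
   with \<phi>2 = \<partial>t vh, and the third one, differentiated in time (it is linear in uh, wh and
   holds at every t), with \<phi>3 = wh. Adding them and integrating by parts on each cell, every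
   volume term of dE/dt cancels and only one-sided interface fluxes remain. Their periodic
   sum, together with the time derivative of the penalty terms (\<alpha>11[uh]^2 - \<alpha>33[wh]^2)/2,
   vanishes interface by interface, because of the form of the numerical fluxes. *)

lemma cellval_has_real_derivative_sum:
  "(cellval k c j has_real_derivative (\<Sum>i\<le>k. c j i * (real i * x ^ (i - 1)))) (at x within X)"
  unfolding cellval_def[abs_def] by (auto intro!: derivative_eq_intros sum.cong simp: ac_simps)

lemma deriv_cellval: "deriv (cellval k c j) x = (\<Sum>i\<le>k. c j i * (real i * x ^ (i - 1)))"
  using cellval_has_real_derivative_sum DERIV_imp_deriv by blast

lemma cellval_has_real_derivative:
  "(cellval k c j has_real_derivative deriv (cellval k c j) x) (at x within X)"
  unfolding deriv_cellval by (rule cellval_has_real_derivative_sum)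

lemma continuous_on_cellval: "continuous_on X (cellval k c j)"
  unfolding cellval_def[abs_def] by (intro continuous_intros)

lemma continuous_on_deriv_cellval: "continuous_on X (deriv (cellval k c j))"
  unfolding deriv_cellval[abs_def] by (intro continuous_intros)

lemma cellval_has_time_derivative:
  assumes "\<forall>i\<le>k. ((\<lambda>s. c s j i) has_real_derivative c' j i) (at t within S)"
  shows "((\<lambda>s. cellval k (c s) j x) has_real_derivative cellval k c' j x) (at t within S)"
  unfolding cellval_def using assms by (auto intro!: DERIV_sum DERIV_cmult_right)

lemma continuous_on_cellval_time:
  assumes "\<forall>i\<le>k. continuous_on S (\<lambda>s. c s j i)"
  shows "continuous_on (S \<times> X) (\<lambda>p. cellval k (c (fst p)) j (snd p))"
  unfolding cellval_def using assms
  by (auto intro!: continuous_intros continuous_on_compose2[of S _ _ fst])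

lemma integral_cellval_by_parts:
  assumes "a \<le> b"
  shows "integral {a..b} (\<lambda>x. cellval k c j x * deriv (cellval k d j) x)
       + integral {a..b} (\<lambda>x. cellval k d j x * deriv (cellval k c j) x)
       = cellval k c j b * cellval k d j b - cellval k c j a * cellval k d j a"
proof -
  have "((\<lambda>x. cellval k c j x * deriv (cellval k d j) x + cellval k d j x * deriv (cellval k c j) x)
      has_integral cellval k c j b * cellval k d j b - cellval k c j a * cellval k d j a) {a..b}"
    using assms
    by (intro fundamental_theorem_of_calculus)
       (auto intro!: derivative_eq_intros cellval_has_real_derivative
             simp: has_real_derivative_iff_has_vector_derivative[symmetric] ac_simps)
  moreover have "(\<lambda>x. cellval k c j x * deriv (cellval k d j) x) integrable_on {a..b}"
    and "(\<lambda>x. cellval k d j x * deriv (cellval k c j) x) integrable_on {a..b}"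
    by (intro integrable_continuous_interval continuous_intros continuous_on_cellval
        continuous_on_deriv_cellval)+
  ultimately show ?thesis
    by (metis integral_add integral_unique)
qed

lemma tracem_has_time_derivative:
  assumes "m \<in> {1..N}" "\<forall>j\<in>{1..N}. \<forall>i\<le>k. ((\<lambda>s. c s j i) has_real_derivative c' j i) (at t within S)"
  shows "((\<lambda>s. tracem k xp (c s) m) has_real_derivative tracem k xp c' m) (at t within S)"
  unfolding tracem_def using assms by (auto intro!: cellval_has_time_derivative)

lemma tracep_has_time_derivative:
  assumes "m \<in> {1..N}" "\<forall>j\<in>{1..N}. \<forall>i\<le>k. ((\<lambda>s. c s j i) has_real_derivative c' j i) (at t within S)"
  shows "((\<lambda>s. tracep k N xp (c s) m) has_real_derivative tracep k N xp c' m) (at t within S)"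
  unfolding tracep_def using assms by (auto intro!: cellval_has_time_derivative)

lemma jump_has_time_derivative:
  assumes "m \<in> {1..N}" "\<forall>j\<in>{1..N}. \<forall>i\<le>k. ((\<lambda>s. c s j i) has_real_derivative c' j i) (at t within S)"
  shows "((\<lambda>s. jump k N xp (c s) m) has_real_derivative jump k N xp c' m) (at t within S)"
  unfolding jump_def using assms by (intro DERIV_diff tracem_has_time_derivative tracep_has_time_derivative)

lemma avg_has_time_derivative:
  assumes "m \<in> {1..N}" "\<forall>j\<in>{1..N}. \<forall>i\<le>k. ((\<lambda>s. c s j i) has_real_derivative c' j i) (at t within S)"
  shows "((\<lambda>s. avg k N xp (c s) m) has_real_derivative avg k N xp c' m) (at t within S)"
  unfolding avg_def using assms
  by (intro DERIV_cdivide DERIV_add tracem_has_time_derivative tracep_has_time_derivative)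

lemma integral_cellval_mult_has_time_derivative:
  assumes "\<forall>i\<le>k. ((\<lambda>s. c s j i) has_real_derivative c' j i) (at t within S)"
    and "continuous_on {a..b} g"
  shows "((\<lambda>s. integral {a..b} (\<lambda>x. cellval k (c s) j x * g x)) has_real_derivative
           integral {a..b} (\<lambda>x. cellval k c' j x * g x)) (at t within S)"
proof -
  have linear: "integral {a..b} (\<lambda>x. cellval k d j x * g x)
      = (\<Sum>i\<le>k. d j i * integral {a..b} (\<lambda>x. x ^ i * g x))"
    for d :: "nat \<Rightarrow> nat \<Rightarrow> real"
    unfolding cellval_def sum_distrib_right mult.assoc
    using assms(2) by (subst integral_sum) (auto intro!: integrable_continuous_interval continuous_intros)
  show ?thesis
    unfolding linear using assms(1) by (auto intro!: DERIV_sum DERIV_cmult_right)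
qed

lemma cell_endpoints_le:
  fixes xp :: "nat \<Rightarrow> 'a::order" and j N :: nat
  assumes "\<forall>j<N. xp j < xp (j + 1)" "j \<in> {1..N}"
  shows "xp (j - 1) \<le> xp j"
proof -
  obtain i where "j = Suc i" "i < N"
    using assms(2) by (cases j) auto
  then show ?thesis
    using assms(1) by (simp add: less_imp_le)
qed

lemma prv_in: "j \<in> {1..N} \<Longrightarrow> prv N j \<in> {1..N}"
  by (auto simp: prv_def)

lemma tracep_prv: "j \<in> {1..N} \<Longrightarrow> tracep k N xp c (prv N j) = cellval k c j (xp (j - 1))"
  by (auto simp: tracep_def prv_def)

lemma bij_betw_prv: "bij_betw (prv N) {1..N} {1..N}"
  by (rule bij_betw_byWitness[where f' = "\<lambda>m. if m = N then 1 else m + 1"]) (auto simp: prv_def)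

lemma sum_prv: "(\<Sum>j=1..N. f (prv N j)) = (\<Sum>m=1..N. f m)"
  using sum.reindex_bij_betw[OF bij_betw_prv] .

lemma smooth_has_continuous_deriv:
  fixes f :: "real \<Rightarrow> real"
  assumes "\<forall>n x. (deriv ^^ n) f differentiable at x"
  shows "(f has_real_derivative deriv f x) (at x)" and "continuous_on UNIV (deriv f)"
proof -
  show "(f has_real_derivative deriv f x) (at x)"
    using assms[rule_format, of 0] by (simp add: DERIV_deriv_iff_real_differentiable)
  show "continuous_on UNIV (deriv f)"
    using assms[rule_format, of 1]
    by (simp add: differentiable_at_imp_differentiable_on differentiable_imp_continuous_on)
qed

definition energy_deriv :: "nat \<Rightarrow> nat \<Rightarrow> (nat \<Rightarrow> real) \<Rightarrow> (real \<Rightarrow> real) \<Rightarrow> real \<Rightarrow> real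
    \<Rightarrow> (nat \<Rightarrow> nat \<Rightarrow> real) \<Rightarrow> (nat \<Rightarrow> nat \<Rightarrow> real) \<Rightarrow> (nat \<Rightarrow> nat \<Rightarrow> real)
    \<Rightarrow> (nat \<Rightarrow> nat \<Rightarrow> real) \<Rightarrow> (nat \<Rightarrow> nat \<Rightarrow> real) \<Rightarrow> (nat \<Rightarrow> nat \<Rightarrow> real) \<Rightarrow> real" where
  "energy_deriv k N xp V' a11 a33 u v w u' v' w' =
     (\<Sum>j=1..N. integral {xp (j - 1)..xp j} (\<lambda>x. cellval k v j x * cellval k v' j x
        + cellval k w j x * cellval k w' j x - V' (cellval k u j x) * cellval k u' j x))
     + (\<Sum>m=1..N. a11 * jump k N xp u m * jump k N xp u' m - a33 * jump k N xp w m * jump k N xp w' m)"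

lemma integral_energy_density_has_time_derivative:
  fixes u v w u' v' w' :: "real \<Rightarrow> nat \<Rightarrow> nat \<Rightarrow> real"
  assumes V: "\<And>y. (V has_real_derivative V' y) (at y)" "continuous_on UNIV V'"
    and S: "convex S" "t \<in> S"
    and du: "\<forall>s\<in>S. \<forall>i\<le>k. ((\<lambda>s. u s j i) has_real_derivative u' s j i) (at s within S)"
    and dv: "\<forall>s\<in>S. \<forall>i\<le>k. ((\<lambda>s. v s j i) has_real_derivative v' s j i) (at s within S)"
    and dw: "\<forall>s\<in>S. \<forall>i\<le>k. ((\<lambda>s. w s j i) has_real_derivative w' s j i) (at s within S)"
    and cu: "\<forall>i\<le>k. continuous_on S (\<lambda>s. u' s j i)"
    and cv: "\<forall>i\<le>k. continuous_on S (\<lambda>s. v' s j i)"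
    and cw: "\<forall>i\<le>k. continuous_on S (\<lambda>s. w' s j i)"
  shows "((\<lambda>s. integral {a..b} (\<lambda>x. (cellval k (v s) j x ^ 2 + cellval k (w s) j x ^ 2) / 2
                                   - V (cellval k (u s) j x)))
      has_real_derivative integral {a..b} (\<lambda>x. cellval k (v t) j x * cellval k (v' t) j x
        + cellval k (w t) j x * cellval k (w' t) j x - V' (cellval k (u t) j x) * cellval k (u' t) j x))
      (at t within S)"
proof -
  have cV: "continuous_on UNIV V"
    using V(1) by (meson DERIV_isCont continuous_at_imp_continuous_on)
  have coeff_cont: "\<forall>i\<le>k. continuous_on S (\<lambda>s. c s j i)"
    if "\<forall>s\<in>S. \<forall>i\<le>k. ((\<lambda>s. c s j i) has_real_derivative c' s j i) (at s within S)"
    for c c' :: "real \<Rightarrow> nat \<Rightarrow> nat \<Rightarrow> real"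
    using that by (meson DERIV_continuous continuous_on_eq_continuous_within)
  have time_deriv: "((\<lambda>s. cellval k (c s) j x) has_real_derivative cellval k (c' s) j x) (at s within S)"
    if "\<forall>s\<in>S. \<forall>i\<le>k. ((\<lambda>s. c s j i) has_real_derivative c' s j i) (at s within S)" "s \<in> S"
    for c c' :: "real \<Rightarrow> nat \<Rightarrow> nat \<Rightarrow> real" and s x
    using that by (intro cellval_has_time_derivative) blast
  let ?density = "\<lambda>s x. (cellval k (v s) j x ^ 2 + cellval k (w s) j x ^ 2) / 2 - V (cellval k (u s) j x)"
  let ?rate = "\<lambda>s x. cellval k (v s) j x * cellval k (v' s) j x
      + cellval k (w s) j x * cellval k (w' s) j x - V' (cellval k (u s) j x) * cellval k (u' s) j x"
  show ?thesis
  proof (rule leibniz_rule_field_derivative[where fx = ?rate, OF _ _ _ S(2) S(1), unfolded cbox_interval])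
    fix s x assume s: "s \<in> S"
    show "((\<lambda>s. ?density s x) has_real_derivative ?rate s x) (at s within S)"
      using time_deriv[of u u' s x, OF du s] time_deriv[of v v' s x, OF dv s] time_deriv[of w w' s x, OF dw s]
      by (auto intro!: derivative_eq_intros DERIV_chain2[OF V(1)])
  next
    fix s
    show "?density s integrable_on {a..b}"
      by (intro integrable_continuous_interval continuous_intros continuous_on_cellval
          continuous_on_compose2[OF cV]) auto
  next
    show "continuous_on (S \<times> {a..b}) (\<lambda>(s, x). ?rate s x)"
      unfolding case_prod_beta
      using coeff_cont[of u u', OF du] coeff_cont[of v v', OF dv] coeff_cont[of w w', OF dw] cu cv cw
      by (intro continuous_intros continuous_on_cellval_time
          continuous_on_compose2[OF V(2) continuous_on_cellval_time]) auto
  qed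
qed

lemma energy_has_real_derivative:
  fixes u v w u' v' w' :: "real \<Rightarrow> nat \<Rightarrow> nat \<Rightarrow> real"
  assumes V: "\<And>y. (V has_real_derivative V' y) (at y)" "continuous_on UNIV V'"
    and S: "convex S" "t \<in> S"
    and du: "\<forall>s\<in>S. \<forall>j\<in>{1..N}. \<forall>i\<le>k. ((\<lambda>s. u s j i) has_real_derivative u' s j i) (at s within S)"
    and dv: "\<forall>s\<in>S. \<forall>j\<in>{1..N}. \<forall>i\<le>k. ((\<lambda>s. v s j i) has_real_derivative v' s j i) (at s within S)"
    and dw: "\<forall>s\<in>S. \<forall>j\<in>{1..N}. \<forall>i\<le>k. ((\<lambda>s. w s j i) has_real_derivative w' s j i) (at s within S)"
    and cu: "\<forall>j\<in>{1..N}. \<forall>i\<le>k. continuous_on S (\<lambda>s. u' s j i)"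
    and cv: "\<forall>j\<in>{1..N}. \<forall>i\<le>k. continuous_on S (\<lambda>s. v' s j i)"
    and cw: "\<forall>j\<in>{1..N}. \<forall>i\<le>k. continuous_on S (\<lambda>s. w' s j i)"
  shows "((\<lambda>s. energy k N xp V a11 a33 (u s) (v s) (w s)) has_real_derivative
           energy_deriv k N xp V' a11 a33 (u t) (v t) (w t) (u' t) (v' t) (w' t)) (at t within S)"
proof -
  have interface: "((\<lambda>s. (1/2) * (a11 * jump k N xp (u s) m ^ 2 - a33 * jump k N xp (w s) m ^ 2))
      has_real_derivative a11 * jump k N xp (u t) m * jump k N xp (u' t) m
        - a33 * jump k N xp (w t) m * jump k N xp (w' t) m) (at t within S)" if m: "m \<in> {1..N}" for m
    using jump_has_time_derivative[OF m, of k u "u' t" t S] jump_has_time_derivative[OF m, of k w "w' t" t S]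
      du dw S(2)
    by (auto intro!: derivative_eq_intros simp: algebra_simps)
  show ?thesis
    unfolding energy_def energy_deriv_def sum_distrib_left
    using du dv dw cu cv cw
    by (intro DERIV_add DERIV_sum interface integral_energy_density_has_time_derivative[OF V S]) auto
qed

lemma gradient_equation_time_derivative:
  fixes u w :: "real \<Rightarrow> nat \<Rightarrow> nat \<Rightarrow> real"
  assumes S: "t \<in> S" "at t within S \<noteq> bot" and j: "j \<in> {1..N}"
    and du: "\<forall>j\<in>{1..N}. \<forall>i\<le>k. ((\<lambda>s. u s j i) has_real_derivative u' j i) (at t within S)"
    and dw: "\<forall>j\<in>{1..N}. \<forall>i\<le>k. ((\<lambda>s. w s j i) has_real_derivative w' j i) (at t within S)"
    and eq: "\<forall>s\<in>S.
      (let uhat = (\<lambda>m. avg k N xp (u s) m - a13 * jump k N xp (u s) m - a33 * jump k N xp (w s) m) in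
       integral {xp (j - 1)..xp j} (\<lambda>x. cellval k (u s) j x * deriv (cellval k \<phi> j) x)
       - uhat j * tracem k xp \<phi> j + uhat (prv N j) * tracep k N xp \<phi> (prv N j)
       = - integral {xp (j - 1)..xp j} (\<lambda>x. cellval k (w s) j x * cellval k \<phi> j x))"
  shows "let uhat = (\<lambda>m. avg k N xp u' m - a13 * jump k N xp u' m - a33 * jump k N xp w' m) in
       integral {xp (j - 1)..xp j} (\<lambda>x. cellval k u' j x * deriv (cellval k \<phi> j) x)
       - uhat j * tracem k xp \<phi> j + uhat (prv N j) * tracep k N xp \<phi> (prv N j)
       = - integral {xp (j - 1)..xp j} (\<lambda>x. cellval k w' j x * cellval k \<phi> j x)"
proof -
  let ?I = "\<lambda>c g. integral {xp (j - 1)..xp j} (\<lambda>x. cellval k c j x * g x)"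
  define uhat where "uhat c d m = avg k N xp c m - a13 * jump k N xp c m - a33 * jump k N xp d m" for c d m
  define residual where "residual c d = ?I c (deriv (cellval k \<phi> j)) - uhat c d j * tracem k xp \<phi> j
      + uhat c d (prv N j) * tracep k N xp \<phi> (prv N j) + ?I d (cellval k \<phi> j)" for c d
  have uhat_deriv: "((\<lambda>s. uhat (u s) (w s) m) has_real_derivative uhat u' w' m) (at t within S)"
    if "m \<in> {1..N}" for m
    unfolding uhat_def using that du dw
    by (intro DERIV_diff DERIV_cmult jump_has_time_derivative avg_has_time_derivative)
  have D: "((\<lambda>s. residual (u s) (w s)) has_real_derivative residual u' w') (at t within S)"
    unfolding residual_def using j du dw
    by (intro DERIV_add DERIV_diff DERIV_cmult_right uhat_deriv prv_in
        integral_cellval_mult_has_time_derivative continuous_on_cellval continuous_on_deriv_cellval) auto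
  have vanish: "residual (u s) (w s) = 0" if "s \<in> S" for s
    using eq that unfolding residual_def uhat_def Let_def by fastforce
  have "((\<lambda>s. 0) has_real_derivative residual u' w') (at t within S)"
    by (rule has_field_derivative_transform_within[OF D zero_less_one S(1)]) (simp add: vanish)
  then have "residual u' w' = 0"
    using has_field_derivative_unique[OF _ DERIV_const S(2)] by blast
  then show ?thesis
    unfolding residual_def uhat_def Let_def by linarith
qed

lemma energy_deriv_eq_0:
  assumes mesh: "\<forall>j<N. xp j < xp (j + 1)"
    and V': "continuous_on UNIV V'"
    and eq1: "\<forall>j\<in>{1..N}.
      (let what = (\<lambda>m. avg k N xp w m + a11 * jump k N xp u m
                        + a13 * jump k N xp w m - \<beta> * jump k N xp v' m) in
       - integral {xp (j - 1)..xp j} (\<lambda>x. cellval k v' j x * cellval k u' j x)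
       - integral {xp (j - 1)..xp j} (\<lambda>x. cellval k w j x * deriv (cellval k u' j) x)
       + what j * tracem k xp u' j - what (prv N j) * tracep k N xp u' (prv N j)
       = - integral {xp (j - 1)..xp j} (\<lambda>x. V' (cellval k u j x) * cellval k u' j x))"
    and eq2: "\<forall>j\<in>{1..N}.
      (let vhat = (\<lambda>m. \<beta> * jump k N xp u' m) in
       integral {xp (j - 1)..xp j} (\<lambda>x. cellval k u' j x * cellval k v' j x)
       + vhat j * tracem k xp v' j - vhat (prv N j) * tracep k N xp v' (prv N j)
       = integral {xp (j - 1)..xp j} (\<lambda>x. cellval k v j x * cellval k v' j x))"
    and eq3: "\<forall>j\<in>{1..N}.
      (let uhat = (\<lambda>m. avg k N xp u' m - a13 * jump k N xp u' m - a33 * jump k N xp w' m) in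
       integral {xp (j - 1)..xp j} (\<lambda>x. cellval k u' j x * deriv (cellval k w j) x)
       - uhat j * tracem k xp w j + uhat (prv N j) * tracep k N xp w (prv N j)
       = - integral {xp (j - 1)..xp j} (\<lambda>x. cellval k w' j x * cellval k w j x))"
  shows "energy_deriv k N xp V' a11 a33 u v w u' v' w' = 0"
proof -
  define what where "what m = avg k N xp w m + a11 * jump k N xp u m
                        + a13 * jump k N xp w m - \<beta> * jump k N xp v' m" for m
  define vhat where "vhat m = \<beta> * jump k N xp u' m" for m
  define uhat where "uhat m = avg k N xp u' m - a13 * jump k N xp u' m - a33 * jump k N xp w' m" for m
  \<comment> \<open>the boundary terms of cell j are flux (tracem k xp) j at its right end and
     flux (tracep k N xp) (prv N j) at its left end\<close>
  define flux where "flux tr m = what m * tr u' m + vhat m * tr v' m + uhat m * tr w m - tr u' m * tr w m"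
    for tr :: "(nat \<Rightarrow> nat \<Rightarrow> real) \<Rightarrow> nat \<Rightarrow> real" and m
  have cell: "integral {xp (j - 1)..xp j} (\<lambda>x. cellval k v j x * cellval k v' j x
        + cellval k w j x * cellval k w' j x - V' (cellval k u j x) * cellval k u' j x)
      = flux (tracem k xp) j - flux (tracep k N xp) (prv N j)" if j: "j \<in> {1..N}" for j
  proof -
    let ?I = "\<lambda>f. integral {xp (j - 1)..xp j} f"
    have parts: "?I (\<lambda>x. cellval k w j x * deriv (cellval k u' j) x)
        + ?I (\<lambda>x. cellval k u' j x * deriv (cellval k w j) x)
        = tracem k xp w j * tracem k xp u' j - tracep k N xp w (prv N j) * tracep k N xp u' (prv N j)"
      using integral_cellval_by_parts[OF cell_endpoints_le[OF mesh j], of k w j u'] j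
      by (simp add: tracem_def tracep_prv)
    have split: "?I (\<lambda>x. cellval k v j x * cellval k v' j x + cellval k w j x * cellval k w' j x
          - V' (cellval k u j x) * cellval k u' j x)
        = ?I (\<lambda>x. cellval k v j x * cellval k v' j x) + ?I (\<lambda>x. cellval k w' j x * cellval k w j x)
          - ?I (\<lambda>x. V' (cellval k u j x) * cellval k u' j x)"
      by (subst integral_diff integral_add, auto intro!: integrable_continuous_interval continuous_intros
          continuous_on_cellval continuous_on_compose2[OF V'] simp: mult.commute)+
    show ?thesis
      using eq1[rule_format, OF j] eq2[rule_format, OF j] eq3[rule_format, OF j] parts
      unfolding split flux_def what_def vhat_def uhat_def Let_def
      by (simp add: mult.commute)
  qed
  have "(\<Sum>j=1..N. flux (tracem k xp) j - flux (tracep k N xp) (prv N j))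
      = (\<Sum>m=1..N. flux (tracem k xp) m - flux (tracep k N xp) m)"
    by (simp only: sum_subtractf sum_prv)
  moreover have "flux (tracem k xp) m - flux (tracep k N xp) m
      + (a11 * jump k N xp u m * jump k N xp u' m - a33 * jump k N xp w m * jump k N xp w' m) = 0" for m
    unfolding flux_def what_def vhat_def uhat_def jump_def avg_def by (simp add: field_simps)
  ultimately show ?thesis
    unfolding energy_deriv_def using cell by (simp add: sum.distrib[symmetric])
qed

theorem proposition4p1:
  fixes k N :: nat and xp :: "nat \<Rightarrow> real" and V :: "real \<Rightarrow> real"
    and a11 a13 a33 \<beta> T :: real
    and u v w u' v' w' :: "real \<Rightarrow> nat \<Rightarrow> nat \<Rightarrow> real"
  assumes N: "N \<ge> 1"
    and mesh: "\<forall>j<N. xp j < xp (j + 1)"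
    and smooth: "\<forall>n x. (deriv ^^ n) V differentiable at x"
    and du: "\<forall>t\<in>{0..T}. \<forall>j\<in>{1..N}. \<forall>i\<le>k. ((\<lambda>s. u s j i) has_real_derivative u' t j i) (at t within {0..T})"
    and dv: "\<forall>t\<in>{0..T}. \<forall>j\<in>{1..N}. \<forall>i\<le>k. ((\<lambda>s. v s j i) has_real_derivative v' t j i) (at t within {0..T})"
    and dw: "\<forall>t\<in>{0..T}. \<forall>j\<in>{1..N}. \<forall>i\<le>k. ((\<lambda>s. w s j i) has_real_derivative w' t j i) (at t within {0..T})"
    and cu: "\<forall>j\<in>{1..N}. \<forall>i\<le>k. continuous_on {0..T} (\<lambda>t. u' t j i)"
    and cv: "\<forall>j\<in>{1..N}. \<forall>i\<le>k. continuous_on {0..T} (\<lambda>t. v' t j i)"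
    and cw: "\<forall>j\<in>{1..N}. \<forall>i\<le>k. continuous_on {0..T} (\<lambda>t. w' t j i)"
    and eq1: "\<forall>t\<in>{0..T}. \<forall>j\<in>{1..N}. \<forall>\<phi> :: nat \<Rightarrow> nat \<Rightarrow> real.
      (let what = (\<lambda>m. avg k N xp (w t) m + a11 * jump k N xp (u t) m
                        + a13 * jump k N xp (w t) m - \<beta> * jump k N xp (v' t) m) in
       - integral {xp (j - 1)..xp j} (\<lambda>x. cellval k (v' t) j x * cellval k \<phi> j x)
       - integral {xp (j - 1)..xp j} (\<lambda>x. cellval k (w t) j x * deriv (cellval k \<phi> j) x)
       + what j * tracem k xp \<phi> j - what (prv N j) * tracep k N xp \<phi> (prv N j)
       = - integral {xp (j - 1)..xp j} (\<lambda>x. deriv V (cellval k (u t) j x) * cellval k \<phi> j x))"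
    and eq2: "\<forall>t\<in>{0..T}. \<forall>j\<in>{1..N}. \<forall>\<phi> :: nat \<Rightarrow> nat \<Rightarrow> real.
      (let vhat = (\<lambda>m. \<beta> * jump k N xp (u' t) m) in
       integral {xp (j - 1)..xp j} (\<lambda>x. cellval k (u' t) j x * cellval k \<phi> j x)
       + vhat j * tracem k xp \<phi> j - vhat (prv N j) * tracep k N xp \<phi> (prv N j)
       = integral {xp (j - 1)..xp j} (\<lambda>x. cellval k (v t) j x * cellval k \<phi> j x))"
    and eq3: "\<forall>t\<in>{0..T}. \<forall>j\<in>{1..N}. \<forall>\<phi> :: nat \<Rightarrow> nat \<Rightarrow> real.
      (let uhat = (\<lambda>m. avg k N xp (u t) m - a13 * jump k N xp (u t) m - a33 * jump k N xp (w t) m) in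
       integral {xp (j - 1)..xp j} (\<lambda>x. cellval k (u t) j x * deriv (cellval k \<phi> j) x)
       - uhat j * tracem k xp \<phi> j + uhat (prv N j) * tracep k N xp \<phi> (prv N j)
       = - integral {xp (j - 1)..xp j} (\<lambda>x. cellval k (w t) j x * cellval k \<phi> j x))"
  shows "\<forall>t\<in>{0..T}. energy k N xp V a11 a33 (u t) (v t) (w t) = energy k N xp V a11 a33 (u 0) (v 0) (w 0)"
proof (cases "T > 0")
  case False
  then have "{0..T} \<subseteq> {0}"
    by auto
  then show ?thesis
    by auto
next
  case True
  have V: "(V has_real_derivative deriv V y) (at y)" "continuous_on UNIV (deriv V)" for y
    using smooth_has_continuous_deriv[OF smooth] by auto
  have "((\<lambda>s. energy k N xp V a11 a33 (u s) (v s) (w s)) has_real_derivative 0) (at t within {0..T})"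
    if t: "t \<in> {0..T}" for t
  proof -
    have "at t within {0..T} \<noteq> bot"
      using True t by (simp add: trivial_limit_within)
    note gradient_eq = gradient_equation_time_derivative[OF t this _ bspec[OF du t] bspec[OF dw t]]
    have "energy_deriv k N xp (deriv V) a11 a33 (u t) (v t) (w t) (u' t) (v' t) (w' t) = 0"
      by (intro energy_deriv_eq_0[where ?a13.0 = a13 and \<beta> = \<beta>] mesh V(2) ballI
          eq1[rule_format, OF t] eq2[rule_format, OF t] gradient_eq)
        (use eq3 in blast)+
    moreover have "((\<lambda>s. energy k N xp V a11 a33 (u s) (v s) (w s)) has_real_derivative
        energy_deriv k N xp (deriv V) a11 a33 (u t) (v t) (w t) (u' t) (v' t) (w' t)) (at t within {0..T})"
      using V(1) by (rule energy_has_real_derivative[OF _ V(2) convex_real_interval(5) t du dv dw cu cv cw])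
    ultimately show ?thesis by simp
  qed
  then obtain c where "\<forall>t\<in>{0..T}. energy k N xp V a11 a33 (u t) (v t) (w t) = c"
    using has_field_derivative_zero_constant[OF convex_real_interval(5)] by blast
  then show ?thesis
    using True by simp
qed

end
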